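(* Let $\mathcal P$ be a finite-dimensional complex solvable Poisson $n$-Lie algebra, and suppose that for some $x,m_1,\dots,m_{n-2}\in\mathcal P$ the restriction of the operator $Q_{(x,m_1,\dots,m_{n-2})}:z\mapsto[x,m_1,\dots,m_{n-2},z]$ to $\mathcal P^2$ is an invertible map $\mathcal P^2\to\mathcal P^2$. Then $\mathcal P\cdot\mathcal P=0$.
   Context: A Poisson $n$-Lie algebra is a commutative associative algebra $(\mathcal P,\cdot)$ with an $n$-linear skew-symmetric bracket satisfying the fundamental identity $[x_1,\dots,x_{n-1},[y_1,\dots,y_n]]=\sum_{i=1}^n[y_1,\dots,[x_1,\dots,x_{n-1},y_i],\dots,y_n]$ and the Leibniz rule $[y\cdot z,x_2,\dots,x_n]=y\cdot[z,x_2,\dots,x_n]+z\cdot[y,x_2,\dots,x_n]$. Products/brackets of subspaces are linear spans; $\mathcal P^2=[\mathcal P,\dots,\mathcal P]+\mathcal P\cdot\mathcal P$. $\mathcal P$ is solvable if $\mathcal P^{(s)}=0$ for some $s$, with $\mathcal P^{(1)}=\mathcal P$, $\mathcal P^{(k+1)}=[\mathcal P^{(k)},\mathcal P^{(k)},\mathcal P,\dots,\mathcal P]+\mathcal P^{(k)}\cdot\mathcal P^{(k)}$. *)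

theory Defs
  imports Complex_Main
begin

text \<open>The commutative associative product is mult, and the n-ary bracket is br, applied to
lists of length n (its values on lists of other lengths are irrelevant).\<close>

definition fin_dim_cvs :: "(complex \<Rightarrow> 'a::ab_group_add \<Rightarrow> 'a) \<Rightarrow> bool" where
  "fin_dim_cvs sc \<longleftrightarrow> vector_space sc \<and> (\<exists>B. finite B \<and> module.span sc B = UNIV)"

definition poisson_nlie ::
  "(complex \<Rightarrow> 'a::ab_group_add \<Rightarrow> 'a) \<Rightarrow> ('a \<Rightarrow> 'a \<Rightarrow> 'a) \<Rightarrow> ('a list \<Rightarrow> 'a) \<Rightarrow> nat \<Rightarrow> bool" where
  "poisson_nlie sc mult br n \<longleftrightarrow>
     vector_space sc \<and>
     \<comment> \<open>commutative associative bilinear product\<close>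
     (\<forall>a. Vector_Spaces.linear sc sc (\<lambda>b. mult a b)) \<and>
     (\<forall>a b. mult a b = mult b a) \<and>
     (\<forall>a b c. mult (mult a b) c = mult a (mult b c)) \<and>
     \<comment> \<open>n-linear bracket\<close>
     (\<forall>xs i. length xs = n \<longrightarrow> i < n \<longrightarrow>
        Vector_Spaces.linear sc sc (\<lambda>y. br (xs[i := y]))) \<and>
     \<comment> \<open>skew-symmetry\<close>
     (\<forall>xs i j. length xs = n \<longrightarrow> i < j \<longrightarrow> j < n \<longrightarrow>
        br (xs[i := xs ! j, j := xs ! i]) = - br xs) \<and>
     \<comment> \<open>fundamental identity\<close>
     (\<forall>xs ys. length xs = n - 1 \<longrightarrow> length ys = n \<longrightarrow>
        br (xs @ [br ys]) = (\<Sum>i<n. br (ys[i := br (xs @ [ys ! i])]))) \<and>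
     \<comment> \<open>Leibniz rule\<close>
     (\<forall>y z xs. length xs = n - 1 \<longrightarrow>
        br (mult y z # xs) = mult y (br (z # xs)) + mult z (br (y # xs)))"

definition br_sp :: "(complex \<Rightarrow> 'a::ab_group_add \<Rightarrow> 'a) \<Rightarrow> ('a list \<Rightarrow> 'a) \<Rightarrow> nat \<Rightarrow> 'a set \<Rightarrow> 'a set \<Rightarrow> 'a set" where
  "br_sp sc br n A B = module.span sc {br (a # b # zs) | a b zs. a \<in> A \<and> b \<in> B \<and> length zs = n - 2}"

definition mult_sp :: "(complex \<Rightarrow> 'a::ab_group_add \<Rightarrow> 'a) \<Rightarrow> ('a \<Rightarrow> 'a \<Rightarrow> 'a) \<Rightarrow> 'a set \<Rightarrow> 'a set \<Rightarrow> 'a set" where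
  "mult_sp sc mult A B = module.span sc {mult a b | a b. a \<in> A \<and> b \<in> B}"

text \<open>P^2 = [P,...,P] + P.P (sum of subspaces = span of union).\<close>
definition sq_sp :: "(complex \<Rightarrow> 'a::ab_group_add \<Rightarrow> 'a) \<Rightarrow> ('a \<Rightarrow> 'a \<Rightarrow> 'a) \<Rightarrow> ('a list \<Rightarrow> 'a) \<Rightarrow> nat \<Rightarrow> 'a set" where
  "sq_sp sc mult br n = module.span sc (br_sp sc br n UNIV UNIV \<union> mult_sp sc mult UNIV UNIV)"

text \<open>Derived series; derived 0 corresponds to P^(1) = P.\<close>
fun derived :: "(complex \<Rightarrow> 'a::ab_group_add \<Rightarrow> 'a) \<Rightarrow> ('a \<Rightarrow> 'a \<Rightarrow> 'a) \<Rightarrow> ('a list \<Rightarrow> 'a) \<Rightarrow> nat \<Rightarrow> nat \<Rightarrow> 'a set" where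
  "derived sc mult br n 0 = UNIV"
| "derived sc mult br n (Suc k) =
     module.span sc (br_sp sc br n (derived sc mult br n k) (derived sc mult br n k)
                     \<union> mult_sp sc mult (derived sc mult br n k) (derived sc mult br n k))"

definition solvable_pnl :: "(complex \<Rightarrow> 'a::ab_group_add \<Rightarrow> 'a) \<Rightarrow> ('a \<Rightarrow> 'a \<Rightarrow> 'a) \<Rightarrow> ('a list \<Rightarrow> 'a) \<Rightarrow> nat \<Rightarrow> bool" where
  "solvable_pnl sc mult br n \<longleftrightarrow> (\<exists>s. derived sc mult br n s = {0})"

end

theory Submission
  imports Defs
begin

text \<open>Fixing the middle slots of the bracket, the maps \<open>D z a = [a, m_1, ..., m_(n-2), z]\<close>
  form a family of derivations of the product with \<open>D a b = - D b a\<close>, and \<open>Q = - D x\<close>.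
  As \<open>D x\<close> kills \<open>x\<close> and is injective on products, the Leibniz rule gives successively
  \<open>x x = 0\<close>, \<open>x D z x = 0\<close>, \<open>x y = 0\<close>, \<open>y D z x = 0\<close> and finally \<open>y z = 0\<close>,
  each time by showing that \<open>D x\<close> kills the product in question.\<close>

definition derivation :: "('a::ab_group_add \<Rightarrow> 'a \<Rightarrow> 'a) \<Rightarrow> ('a \<Rightarrow> 'a) \<Rightarrow> bool" where
  "derivation mult d \<longleftrightarrow> (\<forall>a b. d (mult a b) = mult a (d b) + mult b (d a))"

lemma derivation_zero:
  assumes "derivation mult d" and "\<And>a b. mult a b = mult b a" and "\<And>a. additive (mult a)"
  shows "d 0 = 0"
proof -
  have mult_0: "mult a 0 = 0" for a
    using additive.zero[OF assms(3)] .
  have "d 0 = d (mult 0 0)" by (simp add: mult_0)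
  also have "\<dots> = mult 0 (d 0) + mult 0 (d 0)"
    using assms(1) unfolding derivation_def by blast
  also have "\<dots> = 0"
    using assms(2)[of 0] mult_0 by simp
  finally show ?thesis .
qed

lemma mult_eq_0_if_skew_derivation_injective:
  fixes mult :: "'a::ab_group_add \<Rightarrow> 'a \<Rightarrow> 'a" and D :: "'a \<Rightarrow> 'a \<Rightarrow> 'a"
  assumes comm: "\<And>a b. mult a b = mult b a"
    and add: "\<And>a. additive (mult a)"
    and der: "\<And>z. derivation mult (D z)"
    and skew: "\<And>a b. D a b = - D b a"
    and no_2_torsion: "\<And>v::'a. v + v = 0 \<Longrightarrow> v = 0"
    and inj: "\<And>a b. D x (mult a b) = 0 \<Longrightarrow> mult a b = 0"
  shows "mult a b = 0"
proof -
  have mult_0: "mult c 0 = 0" and mult_minus: "mult c (- v) = - mult c v" for c v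
    using additive.zero[OF add] additive.minus[OF add] by blast+
  have D_prod: "D z (mult c e) = mult c (D z e) + mult e (D z c)" for z c e
    using der unfolding derivation_def by blast
  have D_zero: "D z 0 = 0" for z
    using derivation_zero[OF der comm add] .
  have Dxx: "D x x = 0"
    by (rule no_2_torsion) (metis skew eq_neg_iff_add_eq_0)
  have xx: "mult x x = 0"
    by (rule inj) (simp add: D_prod Dxx mult_0)
  have x_Dx: "mult x (D z x) = 0" for z
    by (rule no_2_torsion) (metis D_prod xx D_zero)
  have xy: "mult x y = 0" for y
  proof (rule inj)
    show "D x (mult x y) = 0"
      using D_prod[of x x y] skew[of x y] Dxx x_Dx[of y] mult_0 mult_minus by simp
  qed
  have y_Dx: "mult y (D z x) = 0" for y z
    using D_prod[of z x y] xy D_zero by simp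
  show ?thesis
  proof (rule inj)
    show "D x (mult a b) = 0"
      using D_prod[of x a b] skew[of x a] skew[of x b] y_Dx mult_minus by simp
  qed
qed

lemma vector_space_add_self_eq_0:
  fixes scale :: "'b::field_char_0 \<Rightarrow> 'a::ab_group_add \<Rightarrow> 'a" and v :: 'a
  assumes "vector_space scale" and "v + v = 0"
  shows "v = 0"
proof -
  interpret vector_space scale by fact
  have "scale (1 + 1) v = 0"
    using assms(2) by (simp only: scale_left_distrib scale_one)
  moreover have "(1 + 1 :: 'b) \<noteq> 0"
    by simp
  ultimately show ?thesis
    by simp
qed

lemma linear_imp_additive: "Vector_Spaces.linear s s f \<Longrightarrow> additive f"
  by (simp add: additive_def Vector_Spaces.linear_iff)

context
  fixes sc :: "complex \<Rightarrow> 'a::ab_group_add \<Rightarrow> 'a"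
    and mult :: "'a \<Rightarrow> 'a \<Rightarrow> 'a"
    and br :: "'a list \<Rightarrow> 'a"
    and n :: nat
  assumes P: "poisson_nlie sc mult br n"
begin

lemma poisson_nlie_vector_space: "vector_space sc"
  using P unfolding poisson_nlie_def by blast

lemma poisson_nlie_mult_commute: "mult a b = mult b a"
  using P unfolding poisson_nlie_def by blast

lemma poisson_nlie_mult_additive: "additive (mult a)"
  using P linear_imp_additive unfolding poisson_nlie_def by blast

lemma poisson_nlie_bracket_derivation:
  assumes "length zs = n - 1"
  shows "derivation mult (\<lambda>a. br (a # zs))"
  using P assms unfolding poisson_nlie_def derivation_def by blast

lemma poisson_nlie_bracket_linear:
  assumes "length xs = n" and "i < n"
  shows "Vector_Spaces.linear sc sc (\<lambda>y. br (xs[i := y]))"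
  using P assms unfolding poisson_nlie_def by blast

lemma poisson_nlie_bracket_last_0:
  assumes "length xs = n - 1" and "n > 0"
  shows "br (xs @ [0]) = 0"
proof -
  have "additive (\<lambda>y. br ((xs @ [0])[n - 1 := y]))"
    using linear_imp_additive[OF poisson_nlie_bracket_linear[of "xs @ [0]" "n - 1"]] assms
    by simp
  then have "additive (\<lambda>y. br (xs @ [y]))"
    using assms(1) by (simp add: list_update_append)
  then show ?thesis
    by (rule additive.zero)
qed

lemma poisson_nlie_bracket_skew:
  assumes "length xs = n" and "i < j" and "j < n"
  shows "br (xs[i := xs ! j, j := xs ! i]) = - br xs"
  using P assms unfolding poisson_nlie_def by blast

lemma poisson_nlie_bracket_swap_ends:
  assumes "length ms = n - 2" and "n \<ge> 2"
  shows "br (a # ms @ [b]) = - br (b # ms @ [a])"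
proof -
  obtain k where k: "n = Suc (Suc k)"
    using assms(2) by (metis add_2_eq_Suc le_iff_add)
  then show ?thesis
    using poisson_nlie_bracket_skew[of "b # ms @ [a]" 0 "Suc k"] assms(1)
    by (simp add: nth_append list_update_append)
qed

lemma poisson_nlie_no_2_torsion: "(v::'a) + v = 0 \<Longrightarrow> v = 0"
  by (rule vector_space_add_self_eq_0[OF poisson_nlie_vector_space])

lemma mult_mem_sq_sp: "mult a b \<in> sq_sp sc mult br n"
proof -
  interpret vector_space sc
    by (rule poisson_nlie_vector_space)
  have "mult a b \<in> mult_sp sc mult UNIV UNIV"
    unfolding mult_sp_def by (rule span_base) blast
  then show ?thesis
    unfolding sq_sp_def by (intro span_base UnI2)
qed

lemma zero_mem_sq_sp: "0 \<in> sq_sp sc mult br n"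
proof -
  interpret vector_space sc
    by (rule poisson_nlie_vector_space)
  show ?thesis
    unfolding sq_sp_def by (rule span_zero)
qed

lemma mult_sp_UNIV_eq_0_iff: "mult_sp sc mult UNIV UNIV = {0} \<longleftrightarrow> (\<forall>a b. mult a b = 0)"
proof -
  interpret vector_space sc
    by (rule poisson_nlie_vector_space)
  have "mult_sp sc mult UNIV UNIV = {0}" if "\<forall>a b. mult a b = 0"
  proof -
    have "{mult a b | a b. a \<in> UNIV \<and> b \<in> UNIV} = {0}"
      using that by auto
    then show ?thesis
      unfolding mult_sp_def by simp
  qed
  moreover have "mult a b \<in> mult_sp sc mult UNIV UNIV" for a b
    unfolding mult_sp_def by (rule span_base) blast
  ultimately show ?thesis
    by blast
qed

end

theorem proposition5p17:
  fixes sc :: "complex \<Rightarrow> 'a::ab_group_add \<Rightarrow> 'a"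
    and mult :: "'a \<Rightarrow> 'a \<Rightarrow> 'a"
    and br :: "'a list \<Rightarrow> 'a"
    and n :: nat
    and x :: 'a and ms :: "'a list"
  assumes "n \<ge> 2"
    and "fin_dim_cvs sc"
    and "poisson_nlie sc mult br n"
    and "solvable_pnl sc mult br n"
    and "length ms = n - 2"
    and "bij_betw (\<lambda>z. br (x # ms @ [z])) (sq_sp sc mult br n) (sq_sp sc mult br n)"
  shows "mult_sp sc mult UNIV UNIV = {0}"
proof -
  note P = assms(3)
  note swap = poisson_nlie_bracket_swap_ends[OF P assms(5,1)]
  have Q_kernel: "mult a b = 0" if "br (mult a b # ms @ [x]) = 0" for a b
  proof -
    have "br (x # ms @ [mult a b]) = - br (mult a b # ms @ [x])"
      by (rule swap)
    also have "\<dots> = br (x # ms @ [0])"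
      using that poisson_nlie_bracket_last_0[OF P, of "x # ms"] assms(1,5) by simp
    finally show ?thesis
      using assms(6) mult_mem_sq_sp[OF P] zero_mem_sq_sp[OF P]
      unfolding bij_betw_def inj_on_def by blast
  qed
  have "mult a b = 0" for a b
  proof (rule mult_eq_0_if_skew_derivation_injective
      [where mult = mult and D = "\<lambda>z c. br (c # ms @ [z])" and x = x])
    show "derivation mult (\<lambda>c. br (c # ms @ [z]))" for z
      using poisson_nlie_bracket_derivation[OF P] assms(1,5) by simp
  qed (fact poisson_nlie_mult_commute[OF P] poisson_nlie_mult_additive[OF P] swap
      poisson_nlie_no_2_torsion[OF P] Q_kernel)+
  then show ?thesis
    using mult_sp_UNIV_eq_0_iff[OF P] by blast
qed

end
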